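(* For all $\delta_1,\delta_2\in\mathcal{D}^{LSL}$ and every $t\in[0,1]$, $$(\delta_1\ast\delta_2)(t)\le \min\{\delta_1(t),\delta_2(t)\}.$$
   Context: $\lambda$ denotes Lebesgue measure on $[0,1]$. Let $\mathcal{D}$ be the set of all functions $\delta:[0,1]\to[0,1]$ with $\delta(u)\le u$ for all $u$, $\delta(1)=1$, $\delta$ non-decreasing, and $|\delta(v)-\delta(u)|\le 2|v-u|$ for all $u,v$. Let $\mathcal{D}^{LSL}$ be the set of $\delta\in\mathcal{D}$ such that $x\mapsto \delta(x)/x$ is non-decreasing on $(0,1]$ and $x\mapsto \delta(x)/x^2$ is non-increasing on $(0,1]$. For $\delta_1,\delta_2\in\mathcal{D}^{LSL}$ the star product $\delta_1\ast\delta_2:[0,1]\to[0,1]$ is defined by $(\delta_1\ast\delta_2)(0):=0$ and, for $x\in(0,1]$, $$(\delta_1\ast\delta_2)(x):=\frac{1}{x}\delta_1(x)\delta_2(x)+x^2\int_{[x,1]}\left(\tfrac{\delta_1(u)}{u}\right)'\left(\tfrac{\delta_2(u)}{u}\right)'\,d\lambda(u),$$ where the derivatives exist $\lambda$-almost everywhere. *)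

theory Defs
  imports "HOL-Analysis.Analysis"
begin

text \<open>The class D: functions on [0,1] (values outside [0,1] are irrelevant).\<close>
definition Dcl :: "(real \<Rightarrow> real) set" where
  "Dcl = {\<delta>. (\<forall>u\<in>{0..1}. 0 \<le> \<delta> u \<and> \<delta> u \<le> 1 \<and> \<delta> u \<le> u)
            \<and> \<delta> 1 = 1
            \<and> mono_on {0..1} \<delta>
            \<and> (\<forall>u\<in>{0..1}. \<forall>v\<in>{0..1}. \<bar>\<delta> v - \<delta> u\<bar> \<le> 2 * \<bar>v - u\<bar>)}"

definition Dlsl :: "(real \<Rightarrow> real) set" where
  "Dlsl = {\<delta>. \<delta> \<in> Dcl
            \<and> (\<forall>x\<in>{0<..1}. \<forall>y\<in>{0<..1}. x \<le> y \<longrightarrow> \<delta> x / x \<le> \<delta> y / y)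
            \<and> (\<forall>x\<in>{0<..1}. \<forall>y\<in>{0<..1}. x \<le> y \<longrightarrow> \<delta> y / y^2 \<le> \<delta> x / x^2)}"

text \<open>Derivative of u \<mapsto> \<delta>(u)/u where it exists (0 elsewhere; a null set).\<close>
definition dq :: "(real \<Rightarrow> real) \<Rightarrow> real \<Rightarrow> real" where
  "dq \<delta> u = (if (\<lambda>v. \<delta> v / v) differentiable (at u) then deriv (\<lambda>v. \<delta> v / v) u else 0)"

definition star :: "(real \<Rightarrow> real) \<Rightarrow> (real \<Rightarrow> real) \<Rightarrow> real \<Rightarrow> real" where
  "star \<delta>1 \<delta>2 x = (if x = 0 then 0 else
      \<delta>1 x * \<delta>2 x / x + x^2 * (LINT u:{x..1}|lebesgue. dq \<delta>1 u * dq \<delta>2 u))"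

end

theory Submission
  imports Defs
begin

(* Write q\<^sub>i(u) = \<delta>\<^sub>i(u)/u. As q\<^sub>1 increases and \<delta>\<^sub>1(u)/u\<^sup>2 decreases, on (t,1) we have
   0 \<le> q\<^sub>1' \<le> \<delta>\<^sub>1(t)/t\<^sup>2, and q\<^sub>2' \<ge> 0. Hence
     \<integral>\<^sub>t\<^sup>1 q\<^sub>1' q\<^sub>2' \<le> \<delta>\<^sub>1(t)/t\<^sup>2 \<integral>\<^sub>t\<^sup>1 q\<^sub>2' \<le> \<delta>\<^sub>1(t)/t\<^sup>2 (1 - \<delta>\<^sub>2(t)/t),
   the last step being the inequality \<integral>\<^sub>a\<^sup>b f' \<le> f(b) - f(a) for continuous increasing f,
   obtained by passing to the limit in the integrals of forward difference quotients.
   Multiplied by t\<^sup>2 and added to \<delta>\<^sub>1(t) \<delta>\<^sub>2(t)/t this gives exactly \<delta>\<^sub>1(t);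
   the bound by \<delta>\<^sub>2(t) follows by symmetry. *)

lemma clamp_real: "(a::real) \<le> b \<Longrightarrow> clamp a b x = max a (min x b)"
  unfolding clamp_def Basis_real_def by simp

lemma has_integral_forward_difference_quotient:
  fixes F :: "real \<Rightarrow> real"
  assumes cont: "continuous_on UNIV F" and "a \<le> b" and "0 < r"
  shows "((\<lambda>u. (F (u + r) - F u) / r) has_integral
           (integral {b..b + r} F - integral {a..a + r} F) / r) {a..b}"
proof -
  define lo hi where "lo = a - 1" and "hi = b + r + 1"
  define G where "G v = integral {lo..v} F" for v
  have F_int: "F integrable_on {p..q}" for p q
    by (rule integrable_continuous_real[OF continuous_on_subset[OF cont]]) simp
  have G_deriv: "(G has_real_derivative F v) (at v)" if "lo < v" "v < hi" for v
  proof -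
    have "(G has_real_derivative F v) (at v within {lo..hi})"
      unfolding G_def
      by (rule integral_has_real_derivative[OF continuous_on_subset[OF cont]]) (use that in auto)
    then show ?thesis using at_within_Icc_at[OF that] by simp
  qed
  have "((\<lambda>u. (G (u + r) - G u) / r) has_real_derivative (F (u + r) - F u) / r) (at u)"
    if "u \<in> {a..b}" for u
    using that \<open>0 < r\<close> lo_def hi_def
    by (auto intro!: derivative_eq_intros DERIV_chain2[OF G_deriv] G_deriv)
  then have "((\<lambda>u. (F (u + r) - F u) / r) has_integral
               (G (b + r) - G b) / r - (G (a + r) - G a) / r) {a..b}"
    by (intro fundamental_theorem_of_calculus[OF \<open>a \<le> b\<close>])
       (auto simp: has_real_derivative_iff_has_vector_derivative[symmetric]
         intro: has_field_derivative_at_within)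
  moreover have "G (v + r) - G v = integral {v..v + r} F" if "lo \<le> v" for v
    using Henstock_Kurzweil_Integration.integral_combine[of lo v "v + r" F] F_int that \<open>0 < r\<close>
    unfolding G_def by auto
  ultimately show ?thesis
    using \<open>a \<le> b\<close> lo_def by (simp add: diff_divide_distrib)
qed

lemma integral_forward_difference_quotient_le:
  fixes F :: "real \<Rightarrow> real"
  assumes mono: "mono F" and cont: "continuous_on UNIV F" and "a \<le> b" and "0 < r"
  shows "integral {a..b} (\<lambda>u. (F (u + r) - F u) / r) \<le> F (b + r) - F a"
proof -
  have F_int: "F integrable_on {p..q}" for p q
    by (rule integrable_continuous_real[OF continuous_on_subset[OF cont]]) simp
  have "integral {b..b + r} F \<le> integral {b..b + r} (\<lambda>_. F (b + r))"
    by (rule integral_le[OF F_int]) (auto intro: monoD[OF mono])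
  moreover have "integral {a..a + r} (\<lambda>_. F a) \<le> integral {a..a + r} F"
    by (rule integral_le[OF _ F_int]) (auto intro: monoD[OF mono])
  ultimately have "integral {b..b + r} F - integral {a..a + r} F \<le> r * (F (b + r) - F a)"
    using \<open>0 < r\<close> by (simp add: algebra_simps)
  then show ?thesis
    using integral_unique[OF has_integral_forward_difference_quotient[OF cont \<open>a \<le> b\<close> \<open>0 < r\<close>]]
      \<open>0 < r\<close> by (simp add: divide_le_eq mult.commute)
qed

lemma forward_difference_quotient_tendsto:
  fixes F :: "real \<Rightarrow> real"
  assumes "(F has_real_derivative D) (at u)" and "r \<longlonglongrightarrow> 0" and "\<And>n. r n \<noteq> 0"
  shows "(\<lambda>n. (F (u + r n) - F u) / r n) \<longlonglongrightarrow> D"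
proof -
  have "filterlim r (at 0) sequentially"
    using assms(2,3) by (intro filterlim_atI) auto
  from filterlim_compose[OF DERIV_D[OF assms(1)] this] show ?thesis .
qed

lemma integral_le_increment_of_mono:
  fixes f g :: "real \<Rightarrow> real"
  assumes "a \<le> b" and mono: "mono_on {a..b} f" and cont: "continuous_on {a..b} f"
    and "0 \<le> c" and g_int: "g absolutely_integrable_on {a..b}"
    and g_nonneg: "\<And>u. u \<in> {a<..<b} \<Longrightarrow> 0 \<le> g u"
    and g_le_deriv: "\<And>u. u \<in> {a<..<b} \<Longrightarrow> g u \<noteq> 0 \<Longrightarrow>
                        \<exists>D. (f has_real_derivative D) (at u) \<and> g u \<le> c * D"
  shows "integral {a..b} g \<le> c * (f b - f a)"
proof -
  define F where "F v = f (clamp a b v)" for v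
  define r where "r n = inverse (real (Suc n))" for n
  define h where "h n u = (F (u + r n) - F u) / r n" for n u
  \<comment> \<open>Truncating c * h n by g makes the sequence dominated by g, so dominated convergence
     replaces the Fatou argument.\<close>
  define m where "m n u = min (g u) (c * h n u)" for n u
  have F_eq: "F v = f (max a (min v b))" for v
    unfolding F_def clamp_real[OF \<open>a \<le> b\<close>] ..
  have F_cont: "continuous_on UNIV F"
    unfolding F_def using cont by (intro clamp_continuous_on) simp
  have F_mono: "mono F"
    unfolding F_eq by (intro monoI mono_onD[OF mono]) (use \<open>a \<le> b\<close> in auto)
  have r_pos: "0 < r n" for n
    unfolding r_def by simp
  have h_nonneg: "0 \<le> h n u" for n u
    unfolding h_def using monoD[OF F_mono, of u "u + r n"] r_pos[of n] by simp
  have h_cont: "continuous_on UNIV (h n)" for n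
    unfolding h_def using r_pos[of n]
    by (intro continuous_intros continuous_on_compose2[OF F_cont] F_cont) auto
  have h_int: "h n integrable_on {a..b}" for n
    using h_cont by (rule integrable_continuous_real[OF continuous_on_subset]) simp
  have h_le: "integral {a..b} (h n) \<le> f b - f a" for n
    using integral_forward_difference_quotient_le[OF F_mono F_cont \<open>a \<le> b\<close> r_pos[of n]]
      \<open>a \<le> b\<close> r_pos[of n] unfolding h_def F_eq by simp
  have m_int: "m n integrable_on {a<..<b}" for n
  proof -
    have "(\<lambda>u. c * h n u) absolutely_integrable_on {a..b}"
      by (rule absolutely_integrable_continuous_real)
         (intro continuous_intros continuous_on_subset[OF h_cont]; simp)
    from absolutely_integrable_min_1[OF g_int this] show ?thesis
      unfolding m_def integrable_on_open_interval_real
      using set_lebesgue_integral_eq_integral(1) by blast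
  qed
  have m_bounds: "0 \<le> m n u \<and> m n u \<le> g u" if "u \<in> {a<..<b}" for n u
    unfolding m_def using g_nonneg[OF that] h_nonneg[of n u] \<open>0 \<le> c\<close> by simp
  have m_tendsto: "(\<lambda>n. m n u) \<longlonglongrightarrow> g u" if u: "u \<in> {a<..<b}" for u
  proof (cases "g u = 0")
    case True
    then have "m n u = g u" for n
      using m_bounds[OF u, of n] by simp
    then show ?thesis by simp
  next
    case False
    then obtain D where f_deriv: "(f has_real_derivative D) (at u)" and "g u \<le> c * D"
      using g_le_deriv[OF u] by blast
    have "(F has_real_derivative D) (at u)"
      by (rule has_field_derivative_transform_within_open[OF f_deriv open_greaterThanLessThan u])
         (simp add: F_eq)
    then have "(\<lambda>n. h n u) \<longlonglongrightarrow> D"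
      unfolding h_def
      by (rule forward_difference_quotient_tendsto)
         (use r_pos LIMSEQ_inverse_real_of_nat in \<open>auto simp: r_def\<close>)
    then have "(\<lambda>n. m n u) \<longlonglongrightarrow> min (g u) (c * D)"
      unfolding m_def by (intro tendsto_intros)
    with \<open>g u \<le> c * D\<close> show ?thesis by simp
  qed
  have "(\<lambda>n. integral {a<..<b} (m n)) \<longlonglongrightarrow> integral {a<..<b} g"
  proof (rule dominated_convergence(2)[OF m_int])
    show "(\<lambda>u. norm (g u)) integrable_on {a<..<b}"
      using g_int unfolding absolutely_integrable_on_def integrable_on_open_interval_real by simp
    show "norm (m n u) \<le> norm (g u)" if "u \<in> {a<..<b}" for n u
      using m_bounds[OF that, of n] by simp
  qed (use m_tendsto in blast)
  moreover have "integral {a<..<b} (m n) \<le> c * (f b - f a)" for n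
  proof -
    have "integral {a<..<b} (m n) \<le> integral {a<..<b} (\<lambda>u. c * h n u)"
      by (rule integral_le[OF m_int])
         (use integrable_cmul[OF h_int, of c] in \<open>auto simp: m_def integrable_on_open_interval_real\<close>)
    also have "\<dots> = c * integral {a..b} (h n)"
      by (simp add: integral_open_interval_real[symmetric])
    also have "\<dots> \<le> c * (f b - f a)"
      using h_le \<open>0 \<le> c\<close> by (rule mult_left_mono)
    finally show ?thesis .
  qed
  ultimately have "integral {a<..<b} g \<le> c * (f b - f a)"
    by (intro tendsto_upperbound) auto
  then show ?thesis
    by (simp add: integral_open_interval_real)
qed

lemma Dlsl_bounds: "\<delta> \<in> Dlsl \<Longrightarrow> u \<in> {0..1} \<Longrightarrow> 0 \<le> \<delta> u \<and> \<delta> u \<le> u"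
  unfolding Dlsl_def Dcl_def by auto

lemma Dlsl_one: "\<delta> \<in> Dlsl \<Longrightarrow> \<delta> 1 = 1"
  unfolding Dlsl_def Dcl_def by auto

lemma Dlsl_continuous_on: "\<delta> \<in> Dlsl \<Longrightarrow> continuous_on {0..1} \<delta>"
  by (rule lipschitz_on_continuous_on[of 2], rule lipschitz_onI)
     (auto simp: Dlsl_def Dcl_def dist_real_def)

lemma Dlsl_quotient_mono: "\<delta> \<in> Dlsl \<Longrightarrow> mono_on {0<..1} (\<lambda>v. \<delta> v / v)"
  unfolding Dlsl_def by (auto intro: mono_onI)

lemma mono_on_slope_minus_Dlsl_quotient:
  assumes "\<delta> \<in> Dlsl" and "0 < x"
  shows "mono_on {x..1} (\<lambda>v. \<delta> x / x^2 * v - \<delta> v / v)"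
proof (rule mono_onI)
  fix v w assume v: "v \<in> {x..1}" and w: "w \<in> {x..1}" and "v \<le> w"
  have sq_anti: "\<delta> q / q^2 \<le> \<delta> p / p^2" if "0 < p" "p \<le> q" "q \<le> 1" for p q
    using assms(1) that unfolding Dlsl_def by auto
  define K A\<^sub>v A\<^sub>w where "K = \<delta> x / x^2" and "A\<^sub>v = \<delta> v / v^2" and "A\<^sub>w = \<delta> w / w^2"
  have "\<delta> w / w = w * A\<^sub>w" and "\<delta> v / v = v * A\<^sub>v"
    using v w \<open>0 < x\<close> by (simp_all add: A\<^sub>v_def A\<^sub>w_def power2_eq_square)
  moreover have "w * A\<^sub>w \<le> w * A\<^sub>v"
    unfolding A\<^sub>v_def A\<^sub>w_def
    using sq_anti[of v w] v w \<open>0 < x\<close> \<open>v \<le> w\<close> by (intro mult_left_mono) auto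
  moreover have "(w - v) * A\<^sub>v \<le> (w - v) * K"
    unfolding A\<^sub>v_def K_def
    using sq_anti[of x v] v \<open>0 < x\<close> \<open>v \<le> w\<close> by (intro mult_left_mono) auto
  ultimately show "\<delta> x / x^2 * v - \<delta> v / v \<le> \<delta> x / x^2 * w - \<delta> w / w"
    unfolding K_def[symmetric] by (simp add: algebra_simps)
qed

lemma dq_has_real_derivative:
  "dq \<delta> u \<noteq> 0 \<Longrightarrow> ((\<lambda>v. \<delta> v / v) has_real_derivative dq \<delta> u) (at u)"
  unfolding dq_def by (auto split: if_splits simp: DERIV_deriv_iff_real_differentiable)

lemma dq_bounds:
  assumes "\<delta> \<in> Dlsl" and "0 < x" and u: "u \<in> {x<..<1}"
  shows "0 \<le> dq \<delta> u \<and> dq \<delta> u \<le> \<delta> x / x^2"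
proof (cases "dq \<delta> u = 0")
  case True
  then show ?thesis
    using Dlsl_bounds[OF assms(1), of x] u \<open>0 < x\<close> by simp
next
  case False
  note deriv = dq_has_real_derivative[OF False]
  have u_int: "u \<in> interior {x..1}"
    using u by simp
  have "0 \<le> dq \<delta> u"
    using Dlsl_quotient_mono[OF assms(1)] \<open>0 < x\<close>
    by (intro mono_on_imp_deriv_nonneg[OF _ deriv u_int]) (auto elim: mono_on_subset)
  moreover have "0 \<le> \<delta> x / x^2 - dq \<delta> u"
    by (rule mono_on_imp_deriv_nonneg[OF mono_on_slope_minus_Dlsl_quotient[OF assms(1,2)]
          DERIV_diff[OF DERIV_cmult_Id deriv] u_int])
  ultimately show ?thesis by simp
qed

lemma integral_dq_product_le:
  assumes d1: "\<delta>1 \<in> Dlsl" and d2: "\<delta>2 \<in> Dlsl" and "0 < x" "x \<le> 1"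
    and "(\<lambda>u. dq \<delta>1 u * dq \<delta>2 u) absolutely_integrable_on {x..1}"
  shows "integral {x..1} (\<lambda>u. dq \<delta>1 u * dq \<delta>2 u) \<le> \<delta>1 x / x^2 * (1 - \<delta>2 x / x)"
proof -
  have "integral {x..1} (\<lambda>u. dq \<delta>1 u * dq \<delta>2 u) \<le> \<delta>1 x / x^2 * (\<delta>2 1 / 1 - \<delta>2 x / x)"
  proof (rule integral_le_increment_of_mono)
    show "mono_on {x..1} (\<lambda>v. \<delta>2 v / v)"
      using Dlsl_quotient_mono[OF d2] \<open>0 < x\<close> by (auto elim: mono_on_subset)
    show "continuous_on {x..1} (\<lambda>v. \<delta>2 v / v)"
      using \<open>0 < x\<close>
      by (intro continuous_intros continuous_on_subset[OF Dlsl_continuous_on[OF d2]]) auto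
    show "0 \<le> \<delta>1 x / x^2"
      using Dlsl_bounds[OF d1, of x] \<open>0 < x\<close> \<open>x \<le> 1\<close> by simp
    fix u assume u: "u \<in> {x<..<1}"
    note b1 = dq_bounds[OF d1 \<open>0 < x\<close> u] and b2 = dq_bounds[OF d2 \<open>0 < x\<close> u]
    show "0 \<le> dq \<delta>1 u * dq \<delta>2 u"
      using b1 b2 by simp
    assume "dq \<delta>1 u * dq \<delta>2 u \<noteq> 0"
    then have "((\<lambda>v. \<delta>2 v / v) has_real_derivative dq \<delta>2 u) (at u)"
      by (intro dq_has_real_derivative) simp
    moreover have "dq \<delta>1 u * dq \<delta>2 u \<le> \<delta>1 x / x^2 * dq \<delta>2 u"
      using b1 b2 by (intro mult_right_mono) auto
    ultimately show "\<exists>D. ((\<lambda>v. \<delta>2 v / v) has_real_derivative D) (at u) \<and>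
                   dq \<delta>1 u * dq \<delta>2 u \<le> \<delta>1 x / x^2 * D"
      by blast
  qed (use assms in auto)
  then show ?thesis
    using Dlsl_one[OF d2] by simp
qed

lemma star_le_left:
  assumes d1: "\<delta>1 \<in> Dlsl" and d2: "\<delta>2 \<in> Dlsl" and t: "t \<in> {0..1}"
  shows "star \<delta>1 \<delta>2 t \<le> \<delta>1 t"
proof (cases "t = 0")
  case True
  then show ?thesis
    unfolding star_def using Dlsl_bounds[OF d1, of 0] by simp
next
  case False
  then have "0 < t" "t \<le> 1"
    using t by auto
  let ?g = "\<lambda>u. dq \<delta>1 u * dq \<delta>2 u"
  have "t^2 * (LINT u:{t..1}|lebesgue. ?g u) \<le> t^2 * (\<delta>1 t / t^2 * (1 - \<delta>2 t / t))"
  proof (cases "?g absolutely_integrable_on {t..1}")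
    case True
    then have "(LINT u:{t..1}|lebesgue. ?g u) = integral {t..1} ?g"
      by (rule set_lebesgue_integral_eq_integral(2))
    with integral_dq_product_le[OF d1 d2 \<open>0 < t\<close> \<open>t \<le> 1\<close> True]
    show ?thesis
      by (intro mult_left_mono) simp_all
  next
    case False
    then have "(LINT u:{t..1}|lebesgue. ?g u) = 0"
      unfolding set_lebesgue_integral_def set_integrable_def by (rule not_integrable_integral_eq)
    moreover have "\<delta>2 t / t \<le> 1"
      using Dlsl_bounds[OF d2 t] \<open>0 < t\<close> by simp
    ultimately show ?thesis
      using Dlsl_bounds[OF d1 t] by simp
  qed
  also have "\<dots> = \<delta>1 t - \<delta>1 t * \<delta>2 t / t"
    using \<open>0 < t\<close> by (simp add: field_simps power2_eq_square)
  finally show ?thesis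
    unfolding star_def using False by simp
qed

lemma star_commute: "star \<delta>1 \<delta>2 t = star \<delta>2 \<delta>1 t"
  unfolding star_def by (simp add: mult.commute)

theorem mainTheorem2:
  assumes "\<delta>1 \<in> Dlsl" and "\<delta>2 \<in> Dlsl" and "t \<in> {0..1::real}"
  shows "star \<delta>1 \<delta>2 t \<le> min (\<delta>1 t) (\<delta>2 t)"
  using star_le_left[OF assms] star_le_left[OF assms(2,1,3)] star_commute[of \<delta>1 \<delta>2 t]
  by simp

end
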